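(* Let $\omega>0$, $\bar r>0$, $\bar v>0$ and $T>0$ be such that $e^{AT}\begin{bmatrix}-\bar r\\ \bar v\end{bmatrix}=\begin{bmatrix}\bar r\\ \bar v\end{bmatrix}$ with $A=\begin{bmatrix}0&1\\ \omega^2&0\end{bmatrix}$ (so that $\bar v/\omega-\bar r>0$ and $e^{\omega T}=\frac{\bar v/\omega+\bar r}{\bar v/\omega-\bar r}$). For $\varepsilon_p\in\mathbb R$ define $$\eta(\varepsilon_p)=\frac{\varepsilon_p-\bar r+\sqrt{\varepsilon_p^2-2\bar r\varepsilon_p+(\bar v/\omega)^2}}{\bar v/\omega-\bar r},\quad \delta_1(\varepsilon_p)=\bar r\Big(\eta(\varepsilon_p)+\tfrac1{\eta(\varepsilon_p)}-2\Big),\quad \delta_2(\varepsilon_p)=\bar r\omega\Big(\tfrac1{\eta(\varepsilon_p)}-\eta(\varepsilon_p)\Big),$$ $\varepsilon_p^+=\varepsilon_p+\delta_1(\varepsilon_p)$, $\delta_\alpha(\varepsilon_p)=e^{-2\alpha T}\varepsilon_p^+-\varepsilon_p$, and $\xi=\dfrac{\bar r\omega}{\bar v/\omega-\bar r}$. Then for all $\varepsilon_p\in\mathbb R$, $$|\delta_1(\varepsilon_p)|\le\frac{2\xi}{\omega}|\varepsilon_p|,\qquad |\delta_2(\varepsilon_p)|\le 2\xi|\varepsilon_p|,$$ and, for every $\alpha>\omega$, $$|\delta_\alpha(\varepsilon_p)|\le\big(1-e^{-(\omega+2\alpha)T}\big)|\varepsilon_p|.$$ *)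

theory Defs
  imports "HOL-Analysis.Analysis"
begin

text \<open>Matrix power and matrix exponential for square real matrices
 (the library's exp on vec types is componentwise, so we define the
 matrix exponential as its power series).\<close>

fun matpow :: "real^'n^'n \<Rightarrow> nat \<Rightarrow> real^'n^'n" where
  "matpow M 0 = mat 1"
| "matpow M (Suc k) = M ** matpow M k"

definition mexp :: "real^'n^'n \<Rightarrow> real^'n^'n" where
  "mexp M = (\<Sum>k. (1 / fact k) *\<^sub>R matpow M k)"

definition Amat :: "real \<Rightarrow> real^2^2" where
  "Amat \<omega> = vector [vector [0, 1], vector [\<omega>^2, 0]]"

definition eta :: "real \<Rightarrow> real \<Rightarrow> real \<Rightarrow> real \<Rightarrow> real" where
  "eta \<omega> r v e = (e - r + sqrt (e^2 - 2*r*e + (v/\<omega>)^2)) / (v/\<omega> - r)"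

definition delta1 :: "real \<Rightarrow> real \<Rightarrow> real \<Rightarrow> real \<Rightarrow> real" where
  "delta1 \<omega> r v e = r * (eta \<omega> r v e + 1 / eta \<omega> r v e - 2)"

definition delta2 :: "real \<Rightarrow> real \<Rightarrow> real \<Rightarrow> real \<Rightarrow> real" where
  "delta2 \<omega> r v e = r * \<omega> * (1 / eta \<omega> r v e - eta \<omega> r v e)"

definition eps_plus :: "real \<Rightarrow> real \<Rightarrow> real \<Rightarrow> real \<Rightarrow> real" where
  "eps_plus \<omega> r v e = e + delta1 \<omega> r v e"

definition delta_alpha :: "real \<Rightarrow> real \<Rightarrow> real \<Rightarrow> real \<Rightarrow> real \<Rightarrow> real \<Rightarrow> real" where
  "delta_alpha \<omega> r v T \<alpha> e = exp (-2*\<alpha>*T) * eps_plus \<omega> r v e - e"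

definition xi :: "real \<Rightarrow> real \<Rightarrow> real \<Rightarrow> real" where
  "xi \<omega> r v = r * \<omega> / (v/\<omega> - r)"

end

theory Submission
  imports Defs
begin

text \<open>Since \<open>(T A)\<^sup>2 = (\<omega> T)\<^sup>2 I\<close>, the matrix exponential is \<open>cosh (\<omega> T) I + sinh (\<omega> T) / \<omega> A\<close>,
  and the boundary condition becomes \<open>exp (\<omega> T) (v/\<omega> - r) = v/\<omega> + r\<close>. The rest is algebra in
  \<open>\<eta>\<close>, the positive root of \<open>(v/\<omega> - r) \<eta>\<^sup>2 - 2 (\<epsilon> - r) \<eta> = v/\<omega> + r\<close>. Solving for \<open>\<epsilon>\<close> gives
  \<open>\<epsilon> = (\<eta> - 1) ((v/\<omega> - r) \<eta> + v/\<omega> + r) / (2 \<eta>)\<close>, from which the bounds on \<open>\<delta>\<^sub>1\<close> and \<open>\<delta>\<^sub>2\<close> follow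
  since \<open>\<bar>\<eta> - 1\<bar> \<le> \<eta> + 1\<close>. Moreover \<open>\<epsilon>\<^sup>+ = (\<eta> - 1) ((v/\<omega> + r) \<eta> + v/\<omega> - r) / (2 \<eta>)\<close>, so with
  \<open>p = exp (-\<omega> T) = (v/\<omega> - r) / (v/\<omega> + r)\<close> the numbers \<open>\<epsilon>\<close> and \<open>\<epsilon>\<^sup>+\<close> are the multiples
  \<open>F (p \<eta> + 1)\<close> and \<open>F (\<eta> + p)\<close> of a common \<open>F\<close>, and the contraction estimate becomes an
  inequality between these two factors.\<close>

lemma matpow_of_square_scalar:
  fixes B :: "real^'n^'n"
  assumes BB: "B ** B = s^2 *\<^sub>R mat 1" and s: "s \<noteq> 0"
  shows "matpow B k = (if even k then s^k *\<^sub>R mat 1 else (s^k / s) *\<^sub>R B)"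
proof (induction k)
  case 0
  then show ?case by simp
next
  case (Suc k)
  show ?case
  proof (cases "even k")
    case True
    then show ?thesis using Suc s
      by (simp add: matrix_scalar_ac)
  next
    case False
    then show ?thesis using Suc s
      by (simp add: matrix_scalar_ac scalar_matrix_assoc[symmetric] BB power2_eq_square)
  qed
qed

lemma mexp_of_square_scalar:
  fixes B :: "real^'n^'n"
  assumes BB: "B ** B = s^2 *\<^sub>R mat 1" and s: "s \<noteq> 0"
  shows "mexp B = cosh s *\<^sub>R mat 1 + (sinh s / s) *\<^sub>R B"
proof -
  have "(\<lambda>k. (1 / fact k) *\<^sub>R matpow B k) =
        (\<lambda>k. (if even k then s^k /\<^sub>R fact k else 0) *\<^sub>R mat 1
           + (if even k then 0 else s^k /\<^sub>R fact k) *\<^sub>R ((1 / s) *\<^sub>R B))"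
    using s by (simp add: matpow_of_square_scalar[OF BB s] fun_eq_iff field_simps)
  moreover have "\<dots> sums (cosh s *\<^sub>R mat 1 + sinh s *\<^sub>R ((1 / s) *\<^sub>R B))"
    by (intro sums_add sums_scaleR_left cosh_converges sinh_converges)
  ultimately show ?thesis
    unfolding mexp_def by (simp add: sums_iff)
qed

lemma Amat_square: "Amat \<omega> ** Amat \<omega> = \<omega>^2 *\<^sub>R mat 1"
  by (simp add: vec_eq_iff forall_2 matrix_matrix_mult_def sum_2 Amat_def mat_def)

lemma mexp_Amat:
  assumes "\<omega> * T \<noteq> 0"
  shows "mexp (T *\<^sub>R Amat \<omega>) = cosh (\<omega> * T) *\<^sub>R mat 1 + (sinh (\<omega> * T) / \<omega>) *\<^sub>R Amat \<omega>"
proof -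
  have "(T *\<^sub>R Amat \<omega>) ** (T *\<^sub>R Amat \<omega>) = (\<omega> * T)^2 *\<^sub>R mat 1"
    by (simp add: matrix_scalar_ac scalar_matrix_assoc[symmetric] Amat_square power_mult_distrib power2_eq_square)
  from mexp_of_square_scalar[OF this assms] show ?thesis
    using assms by simp
qed

lemma boundary_condition_exp:
  fixes \<omega> r v T :: real
  assumes "\<omega> > 0" "T > 0"
    and bc: "mexp (T *\<^sub>R Amat \<omega>) *v vector [-r, v] = vector [r, v]"
  shows "exp (\<omega> * T) * (v/\<omega> - r) = v/\<omega> + r"
proof -
  define s where "s = \<omega> * T"
  have "s \<noteq> 0" using assms unfolding s_def by simp
  then have "(cosh s *\<^sub>R mat 1 + (sinh s / \<omega>) *\<^sub>R Amat \<omega>) *v vector [-r, v] = vector [r, v]"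
    using bc mexp_Amat unfolding s_def by simp
  moreover have "(cosh s *\<^sub>R mat 1 + (sinh s / \<omega>) *\<^sub>R Amat \<omega>) *v vector [-r, v]
      = vector [v/\<omega> * sinh s - r * cosh s, v * cosh s - \<omega> * r * sinh s]"
    using \<open>\<omega> > 0\<close>
    by (simp add: vec_eq_iff forall_2 matrix_vector_mult_def sum_2 Amat_def mat_def power2_eq_square)
  ultimately have "vector [v/\<omega> * sinh s - r * cosh s, v * cosh s - \<omega> * r * sinh s] = (vector [r, v] :: real^2)"
    by simp
  then have "v/\<omega> * sinh s - r * cosh s = r" "v * cosh s - \<omega> * r * sinh s = v"
    by (simp_all add: vec_eq_iff forall_2)
  then have c1: "v/\<omega> * sinh s = r * (1 + cosh s)" and c2: "v/\<omega> * (cosh s - 1) = r * sinh s"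
    using \<open>\<omega> > 0\<close> by (simp_all add: field_simps)
  have "exp s * (v/\<omega> - r) = (cosh s + sinh s) * (v/\<omega> - r)"
    by (simp add: sinh_plus_cosh[symmetric] add.commute)
  also have "\<dots> = v/\<omega> + r"
    using c1 c2 by (simp add: algebra_simps)
  finally show ?thesis unfolding s_def .
qed

lemma eta_positive_root:
  fixes \<omega> r v e :: real
  assumes r: "0 < r" and rv: "r < v/\<omega>"
  defines "\<eta> \<equiv> eta \<omega> r v e"
  shows "0 < \<eta>" and "(v/\<omega> - r) * \<eta>^2 - 2 * (e - r) * \<eta> = v/\<omega> + r"
proof -
  define d where "d = v/\<omega> - r"
  define S where "S = sqrt (e^2 - 2*r*e + (v/\<omega>)^2)"
  have d: "0 < d" and c: "0 < d * (v/\<omega> + r)"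
    using r rv unfolding d_def by simp_all
  have rad: "e^2 - 2*r*e + (v/\<omega>)^2 = (e - r)^2 + d * (v/\<omega> + r)"
    unfolding d_def by (simp add: algebra_simps power2_eq_square)
  have S2: "S^2 = (e - r)^2 + d * (v/\<omega> + r)"
    unfolding S_def rad using c by simp
  have "\<bar>e - r\<bar> = sqrt ((e - r)^2)"
    by simp
  also have "\<dots> < S"
    unfolding S_def rad by (rule real_sqrt_less_mono) (use c in simp)
  finally have "\<bar>e - r\<bar> < S" .
  then have "0 < e - r + S" by linarith
  moreover have \<eta>d: "\<eta> * d = e - r + S"
    using d unfolding \<eta>_def eta_def d_def S_def by simp
  ultimately show "0 < \<eta>"
    using d by (metis zero_less_mult_pos2)
  have "d * (d * \<eta>^2 - 2 * (e - r) * \<eta>) = (\<eta> * d - (e - r))^2 - (e - r)^2"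
    by (simp add: algebra_simps power2_eq_square)
  also have "\<dots> = d * (v/\<omega> + r)"
    using \<eta>d S2 by simp
  finally show "(v/\<omega> - r) * \<eta>^2 - 2 * (e - r) * \<eta> = v/\<omega> + r"
    using d unfolding d_def by simp
qed

lemma eps_eq_eta:
  fixes \<omega> r v e :: real
  assumes "0 < r" "r < v/\<omega>"
  defines "\<eta> \<equiv> eta \<omega> r v e"
  shows "e = (\<eta> - 1) * ((v/\<omega> - r) * \<eta> + (v/\<omega> + r)) / (2 * \<eta>)"
proof -
  define u where "u = v/\<omega>"
  have "0 < \<eta>" and root: "(u - r) * \<eta>^2 - 2 * (e - r) * \<eta> = u + r"
    using eta_positive_root[OF assms(1,2)] unfolding \<eta>_def u_def by auto
  have "(\<eta> - 1) * ((u - r) * \<eta> + (u + r)) = (u - r) * \<eta>^2 + 2 * r * \<eta> - (u + r)"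
    by (simp add: algebra_simps power2_eq_square)
  also have "\<dots> = 2 * e * \<eta>"
    using root by (simp add: algebra_simps)
  finally show ?thesis
    using \<open>0 < \<eta>\<close> unfolding u_def by simp
qed

lemma delta1_eq_eta:
  assumes "eta \<omega> r v e \<noteq> 0"
  shows "delta1 \<omega> r v e = r * (eta \<omega> r v e - 1)^2 / eta \<omega> r v e"
  using assms by (simp add: delta1_def field_simps power2_eq_square)

lemma eps_plus_eq_eta:
  fixes \<omega> r v e :: real
  assumes "0 < r" "r < v/\<omega>"
  defines "\<eta> \<equiv> eta \<omega> r v e"
  shows "eps_plus \<omega> r v e = (\<eta> - 1) * ((v/\<omega> + r) * \<eta> + (v/\<omega> - r)) / (2 * \<eta>)"
proof -
  define u where "u = v/\<omega>"
  have "0 < \<eta>"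
    using eta_positive_root[OF assms(1,2)] unfolding \<eta>_def by auto
  have "eps_plus \<omega> r v e = (\<eta> - 1) * ((u - r) * \<eta> + (u + r)) / (2 * \<eta>) + r * (\<eta> - 1)^2 / \<eta>"
    unfolding eps_plus_def u_def \<eta>_def
    using eps_eq_eta[OF assms(1,2)] delta1_eq_eta \<open>0 < \<eta>\<close>[unfolded \<eta>_def] by simp
  also have "\<dots> = (\<eta> - 1) * ((u + r) * \<eta> + (u - r)) / (2 * \<eta>)"
    using \<open>0 < \<eta>\<close> by (simp add: field_simps power2_eq_square)
  finally show ?thesis
    unfolding u_def .
qed

lemma abs_delta2_eq_eta:
  assumes "0 < \<omega>" "0 < r" "0 < eta \<omega> r v e"
  shows "\<bar>delta2 \<omega> r v e\<bar> = r * \<omega> * \<bar>eta \<omega> r v e - 1\<bar> * (eta \<omega> r v e + 1) / eta \<omega> r v e"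
proof -
  define \<eta> where "\<eta> = eta \<omega> r v e"
  have "delta2 \<omega> r v e = r * \<omega> * (1 - \<eta>) * (\<eta> + 1) / \<eta>"
    using assms(3) unfolding delta2_def \<eta>_def[symmetric] by (simp add: field_simps)
  then show ?thesis
    using assms unfolding \<eta>_def[symmetric] by (simp add: abs_mult abs_minus_commute)
qed

lemma abs_delta1_le_abs_delta2:
  fixes \<omega> r v e :: real
  assumes "0 < \<omega>" "0 < r" "r < v/\<omega>"
  shows "\<omega> * \<bar>delta1 \<omega> r v e\<bar> \<le> \<bar>delta2 \<omega> r v e\<bar>"
proof -
  define \<eta> where "\<eta> = eta \<omega> r v e"
  have "0 < \<eta>"
    using eta_positive_root[OF assms(2,3)] unfolding \<eta>_def by auto
  have "\<bar>\<eta> - 1\<bar> * \<bar>\<eta> - 1\<bar> \<le> \<bar>\<eta> - 1\<bar> * (\<eta> + 1)"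
    by (rule mult_left_mono) (use \<open>0 < \<eta>\<close> in auto)
  then have "r * \<omega> * \<bar>\<eta> - 1\<bar> * \<bar>\<eta> - 1\<bar> / \<eta> \<le> r * \<omega> * \<bar>\<eta> - 1\<bar> * (\<eta> + 1) / \<eta>"
    using assms \<open>0 < \<eta>\<close> by (simp add: divide_right_mono mult.assoc)
  moreover have "\<omega> * \<bar>delta1 \<omega> r v e\<bar> = r * \<omega> * \<bar>\<eta> - 1\<bar> * \<bar>\<eta> - 1\<bar> / \<eta>"
    using assms \<open>0 < \<eta>\<close> by (simp add: delta1_eq_eta \<eta>_def[symmetric] abs_mult power2_eq_square)
  ultimately show ?thesis
    using abs_delta2_eq_eta[OF assms(1,2)] \<open>0 < \<eta>\<close> unfolding \<eta>_def by simp
qed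

lemma abs_delta2_le:
  fixes \<omega> r v e :: real
  assumes "0 < \<omega>" "0 < r" "r < v/\<omega>"
  shows "\<bar>delta2 \<omega> r v e\<bar> \<le> 2 * xi \<omega> r v * \<bar>e\<bar>"
proof -
  define u where "u = v/\<omega>"
  define \<eta> where "\<eta> = eta \<omega> r v e"
  define c where "c = r * \<omega> * \<bar>\<eta> - 1\<bar> / ((u - r) * \<eta>)"
  have "0 < \<eta>"
    using eta_positive_root[OF assms(2,3)] unfolding \<eta>_def by auto
  have "0 < u - r"
    using assms unfolding u_def by simp
  have "0 \<le> c"
    unfolding c_def using assms \<open>0 < \<eta>\<close> \<open>0 < u - r\<close> by simp
  have "\<bar>delta2 \<omega> r v e\<bar> = c * ((u - r) * (\<eta> + 1))"
    using abs_delta2_eq_eta[OF assms(1,2)] \<open>0 < \<eta>\<close> \<open>0 < u - r\<close>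
    unfolding c_def \<eta>_def by simp
  also have "\<dots> \<le> c * ((u - r) * \<eta> + (u + r))"
    using \<open>0 \<le> c\<close> assms(2) by (intro mult_left_mono) (simp_all add: algebra_simps)
  also have "\<dots> = 2 * xi \<omega> r v * \<bar>e\<bar>"
  proof -
    have "0 < (u - r) * \<eta> + (u + r)"
      using \<open>0 < \<eta>\<close> \<open>0 < u - r\<close> assms(2) by (simp add: add_pos_pos)
    moreover have "e = (\<eta> - 1) * ((u - r) * \<eta> + (u + r)) / (2 * \<eta>)"
      using eps_eq_eta[OF assms(2,3), of e] unfolding \<eta>_def[symmetric] u_def[symmetric] .
    ultimately have "\<bar>e\<bar> = \<bar>\<eta> - 1\<bar> * ((u - r) * \<eta> + (u + r)) / (2 * \<eta>)"
      using \<open>0 < \<eta>\<close> by (simp add: abs_mult)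
    then show ?thesis
      unfolding c_def xi_def u_def[symmetric] using \<open>0 < \<eta>\<close> \<open>0 < u - r\<close> by simp
  qed
  finally show ?thesis .
qed

lemma abs_scaled_factor_diff_le:
  fixes p q n :: real
  assumes "0 < q" "q \<le> p" "p \<le> 1" "0 < n"
  shows "\<bar>q * (n + p) - (p * n + 1)\<bar> \<le> (1 - p * q) * (p * n + 1)"
proof -
  have "q * n \<le> p * n" "q * p \<le> 1" "p * p * (q * n) \<le> q * n"
    using assms by (simp_all add: mult_right_mono mult_le_one mult_left_le_one_le)
  then show ?thesis
    unfolding abs_le_iff by (simp add: algebra_simps)
qed

lemma abs_scaled_eps_plus_diff_le:
  fixes \<omega> r v e p q :: real
  assumes r: "0 < r" "r < v/\<omega>"
    and p: "p * (v/\<omega> + r) = v/\<omega> - r" and q: "0 < q" "q \<le> p"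
  shows "\<bar>q * eps_plus \<omega> r v e - e\<bar> \<le> (1 - p * q) * \<bar>e\<bar>"
proof -
  define u where "u = v/\<omega>"
  define \<eta> where "\<eta> = eta \<omega> r v e"
  define F where "F = (\<eta> - 1) * (u + r) / (2 * \<eta>)"
  have "0 < \<eta>"
    using eta_positive_root[OF r] unfolding \<eta>_def by auto
  have "0 < u + r" "p * (u + r) = u - r"
    using r p unfolding u_def by simp_all
  then have "p * (u + r) \<le> 1 * (u + r)"
    using r(1) by simp
  then have "p \<le> 1"
    using \<open>0 < u + r\<close> by (simp only: mult_le_cancel_right_pos)
  have e: "e = F * (p * \<eta> + 1)"
  proof -
    have "e = (\<eta> - 1) * ((u - r) * \<eta> + (u + r)) / (2 * \<eta>)"
      using eps_eq_eta[OF r, of e] unfolding \<eta>_def[symmetric] u_def[symmetric] .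
    then show ?thesis
      unfolding F_def \<open>p * (u + r) = u - r\<close>[symmetric] by (simp add: algebra_simps)
  qed
  have eps_plus: "eps_plus \<omega> r v e = F * (\<eta> + p)"
  proof -
    have "eps_plus \<omega> r v e = (\<eta> - 1) * ((u + r) * \<eta> + (u - r)) / (2 * \<eta>)"
      using eps_plus_eq_eta[OF r, of e] unfolding \<eta>_def[symmetric] u_def[symmetric] .
    then show ?thesis
      unfolding F_def \<open>p * (u + r) = u - r\<close>[symmetric] by (simp add: algebra_simps)
  qed
  have "q * eps_plus \<omega> r v e - e = F * (q * (\<eta> + p) - (p * \<eta> + 1))"
    unfolding eps_plus by (simp add: e algebra_simps)
  then have "\<bar>q * eps_plus \<omega> r v e - e\<bar> = \<bar>F\<bar> * \<bar>q * (\<eta> + p) - (p * \<eta> + 1)\<bar>"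
    by (simp add: abs_mult)
  also have "\<dots> \<le> \<bar>F\<bar> * ((1 - p * q) * (p * \<eta> + 1))"
    using abs_scaled_factor_diff_le[OF q \<open>p \<le> 1\<close> \<open>0 < \<eta>\<close>] by (simp add: mult_left_mono)
  also have "\<dots> = (1 - p * q) * \<bar>e\<bar>"
    using \<open>0 < \<eta>\<close> \<open>0 < q\<close> \<open>q \<le> p\<close> by (simp add: e abs_mult)
  finally show ?thesis .
qed

theorem lemma2:
  fixes \<omega> r v T :: real
  assumes "\<omega> > 0" "r > 0" "v > 0" "T > 0"
    and "mexp (T *\<^sub>R Amat \<omega>) *v vector [-r, v] = vector [r, v]"
  shows "\<forall>e::real.
           \<bar>delta1 \<omega> r v e\<bar> \<le> 2 * xi \<omega> r v / \<omega> * \<bar>e\<bar>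
         \<and> \<bar>delta2 \<omega> r v e\<bar> \<le> 2 * xi \<omega> r v * \<bar>e\<bar>
         \<and> (\<forall>\<alpha>>\<omega>. \<bar>delta_alpha \<omega> r v T \<alpha> e\<bar> \<le> (1 - exp (-(\<omega> + 2*\<alpha>)*T)) * \<bar>e\<bar>)"
proof (intro allI conjI impI)
  fix e :: real
  have bc: "exp (\<omega> * T) * (v/\<omega> - r) = v/\<omega> + r"
    using boundary_condition_exp[OF assms(1,4,5)] .
  moreover have "0 < v/\<omega> + r"
    using assms(1-3) by (simp add: add_pos_pos)
  ultimately have "0 < exp (\<omega> * T) * (v/\<omega> - r)"
    by simp
  then have rv: "r < v/\<omega>"
    by (simp add: zero_less_mult_iff)
  show "\<bar>delta2 \<omega> r v e\<bar> \<le> 2 * xi \<omega> r v * \<bar>e\<bar>"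
    using abs_delta2_le[OF assms(1,2) rv] .
  with abs_delta1_le_abs_delta2[OF assms(1,2) rv, of e]
  show "\<bar>delta1 \<omega> r v e\<bar> \<le> 2 * xi \<omega> r v / \<omega> * \<bar>e\<bar>"
    using assms(1) by (simp add: field_simps)
  fix \<alpha> :: real
  assume "\<alpha> > \<omega>"
  then have "exp (-2 * \<alpha> * T) \<le> exp (-(\<omega> * T))"
    using assms(1,4) by simp
  moreover have "exp (-(\<omega> * T)) * (v/\<omega> + r) = v/\<omega> - r"
    unfolding bc[symmetric] by (simp add: exp_minus)
  ultimately have "\<bar>exp (-2 * \<alpha> * T) * eps_plus \<omega> r v e - e\<bar>
      \<le> (1 - exp (-(\<omega> * T)) * exp (-2 * \<alpha> * T)) * \<bar>e\<bar>"
    using abs_scaled_eps_plus_diff_le[OF assms(2) rv] by simp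
  then show "\<bar>delta_alpha \<omega> r v T \<alpha> e\<bar> \<le> (1 - exp (-(\<omega> + 2*\<alpha>)*T)) * \<bar>e\<bar>"
    unfolding delta_alpha_def exp_add[symmetric] by (simp add: algebra_simps)
qed

end
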